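(* The largest integer $k$ with $1\leq k\leq n$ and $S(k)=0$ is $k=\lfloor\vartheta^+(G)\rfloor$.
   Context: Let $G$ be a simple graph with vertex set $V=\{1,\dots,n\}$, edge set $E$ and adjacency matrix $A$. Let $e$ be the all-ones vector, $\langle M,N\rangle=\operatorname{trace}(M^TN)$, and $X\geq 0$ mean entrywise nonnegativity. For real $t$ with $1\leq t\leq n$, $Q(t)$ is the semidefinite program $$\min \tfrac12\langle A,X\rangle\ \text{ s.t. } X\succeq 0,\ X\geq 0,\ \operatorname{trace}(X)=t,\ Xe=t\operatorname{diag}(X)$$ over symmetric $n\times n$ matrices $X$, and $S(t)$ denotes its optimal value. Schrijver's number is $$\vartheta^+(G)=\max\ \operatorname{trace}(X)\ \text{ s.t. } X-xx^T\succeq 0,\ \operatorname{diag}(X)=x,\ X_{i,j}=0\ \forall [i,j]\in E,\ X\geq 0.$$ *)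

theory Defs
  imports "HOL-Analysis.Analysis"
begin

definition simple_graph :: "('n::finite \<Rightarrow> 'n \<Rightarrow> bool) \<Rightarrow> bool" where
  "simple_graph E \<longleftrightarrow> (\<forall>i j. E i j \<longrightarrow> E j i) \<and> (\<forall>i. \<not> E i i)"

definition adj_matrix :: "('n::finite \<Rightarrow> 'n \<Rightarrow> bool) \<Rightarrow> real^'n^'n" where
  "adj_matrix E = (\<chi> i j. if E i j then 1 else 0)"

definition frob_inner :: "real^'n^'n \<Rightarrow> real^'n^'n \<Rightarrow> real" where
  "frob_inner M N = trace (transpose M ** N)"

definition psd :: "real^'n^'n \<Rightarrow> bool" where
  "psd X \<longleftrightarrow> transpose X = X \<and> (\<forall>v. 0 \<le> v \<bullet> (X *v v))"

definition entrywise_nonneg :: "real^'n^'n \<Rightarrow> bool" where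
  "entrywise_nonneg X \<longleftrightarrow> (\<forall>i j. 0 \<le> X $ i $ j)"

definition diag_vec :: "real^'n^'n \<Rightarrow> real^'n" where
  "diag_vec X = (\<chi> i. X $ i $ i)"

definition ones :: "real^'n" where
  "ones = (\<chi> i. 1)"

definition outer :: "real^'n \<Rightarrow> real^'n \<Rightarrow> real^'n^'n" where
  "outer x y = (\<chi> i j. x $ i * y $ j)"

definition Q_feasible :: "real \<Rightarrow> real^'n::finite^'n \<Rightarrow> bool" where
  "Q_feasible t X \<longleftrightarrow> transpose X = X \<and> psd X \<and> entrywise_nonneg X \<and>
     trace X = t \<and> X *v ones = t *\<^sub>R diag_vec X"

definition S_val :: "('n::finite \<Rightarrow> 'n \<Rightarrow> bool) \<Rightarrow> real \<Rightarrow> real" where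
  "S_val E t = Inf {(1/2) * frob_inner (adj_matrix E) X | X. Q_feasible t X}"

definition theta_plus :: "('n::finite \<Rightarrow> 'n \<Rightarrow> bool) \<Rightarrow> real" where
  "theta_plus E = Sup {trace X | X x. transpose X = X \<and> psd (X - outer x x) \<and> diag_vec X = x \<and>
      (\<forall>i j. E i j \<longrightarrow> X $ i $ j = 0) \<and> entrywise_nonneg X}"

end

theory Submission
  imports Defs
begin

text \<open>
  Let \<open>s\<close> be the maximum of the entry sum \<open>\<langle>J, Y\<rangle>\<close> over positive semidefinite, entrywise
  nonnegative matrices \<open>Y\<close> of trace one that vanish on the edges. Comparing a maximiser \<open>Y\<close> with
  the rescalings \<open>D Y D / trace (D Y D)\<close> shows that \<open>s Diag(Y) - Y\<close> is positive semidefinite;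
  since \<open>e\<close> lies in its kernel, \<open>Y e = s diag(Y)\<close>. Mixing \<open>Y\<close> with its diagonal then gives, for
  every \<open>1 \<le> t \<le> s\<close>, a feasible point of \<open>Q(t)\<close> vanishing on the edges, so \<open>S(t) = 0\<close>.
  Conversely, if \<open>S(t) = 0\<close> the minimum is attained at some \<open>X\<close> vanishing on the edges, and
  \<open>X e = t diag(X)\<close>, \<open>trace X = t\<close> make \<open>X - diag(X) diag(X)\<^sup>T\<close> positive semidefinite by
  Cauchy-Schwarz, so \<open>X\<close> is feasible for \<open>\<vartheta>\<^sup>+\<close> with trace \<open>t\<close>. Finally \<open>1 \<le> \<vartheta>\<^sup>+ \<le> s\<close>: a feasible
  \<open>X\<close> of trace \<open>r\<close> for \<open>\<vartheta>\<^sup>+\<close> satisfies \<open>r\<^sup>2 \<le> \<langle>J, X\<rangle> \<le> s r\<close>.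
\<close>

definition bform :: "real^'n^'n \<Rightarrow> ('n::finite \<Rightarrow> real) \<Rightarrow> ('n \<Rightarrow> real) \<Rightarrow> real" where
  "bform X u v = (\<Sum>i\<in>UNIV. \<Sum>j\<in>UNIV. u i * X$i$j * v j)"

definition entry_sum :: "real^'n::finite^'n \<Rightarrow> real" where
  "entry_sum Y = (\<Sum>i\<in>UNIV. \<Sum>j\<in>UNIV. Y$i$j)"

lemma trace_eq_sum_diag: "trace X = (\<Sum>i\<in>UNIV. X$i$i)"
  by (simp add: trace_def)

lemma transpose_eq_self_iff: "transpose X = X \<longleftrightarrow> (\<forall>i j. X$i$j = X$j$i)"
  by (auto simp: transpose_def vec_eq_iff)

lemma mult_ones_eq_scaleR_diag_iff:
  "X *v ones = t *\<^sub>R diag_vec X \<longleftrightarrow> (\<forall>i. (\<Sum>j\<in>UNIV. X$i$j) = t * X$i$i)"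
  by (simp add: vec_eq_iff matrix_vector_mult_def ones_def diag_vec_def)

section \<open>The bilinear form of a matrix\<close>

lemma psd_iff_bform: "psd X \<longleftrightarrow> (\<forall>i j. X$i$j = X$j$i) \<and> (\<forall>u. 0 \<le> bform X u u)"
proof -
  have form: "v \<bullet> (X *v v) = bform X (\<lambda>i. v$i) (\<lambda>i. v$i)" for v
    by (simp add: bform_def inner_vec_def matrix_vector_mult_def sum_distrib_left mult.assoc)
  have "(\<forall>v. 0 \<le> v \<bullet> (X *v v)) \<longleftrightarrow> (\<forall>u. 0 \<le> bform X u u)"
    unfolding form
  proof (intro iffI allI)
    fix u assume "\<forall>v. 0 \<le> bform X (\<lambda>i. v$i) (\<lambda>i. v$i)"
    then have "0 \<le> bform X (\<lambda>i. (\<chi> k. u k)$i) (\<lambda>i. (\<chi> k. u k)$i)"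
      by blast
    then show "0 \<le> bform X u u"
      by simp
  qed simp
  then show ?thesis
    unfolding psd_def transpose_eq_self_iff by blast
qed

lemma bform_commute: "\<forall>i j. X$i$j = X$j$i \<Longrightarrow> bform X u v = bform X v u"
  unfolding bform_def by (subst sum.swap) (simp add: mult.commute mult.left_commute)

lemma bform_add_scaled:
  assumes "\<forall>i j. X$i$j = X$j$i"
  shows "bform X (\<lambda>i. u i + l * v i) (\<lambda>i. u i + l * v i)
    = bform X u u + 2 * l * bform X u v + l\<^sup>2 * bform X v v"
proof -
  have "bform X (\<lambda>i. u i + l * v i) (\<lambda>i. u i + l * v i)
      = bform X u u + l * bform X u v + l * bform X v u + l\<^sup>2 * bform X v v"
    unfolding bform_def power2_eq_square
    by (simp add: algebra_simps sum.distrib sum_distrib_left)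
  then show ?thesis
    using bform_commute[OF assms, of u v] by simp
qed

lemma discriminant_le_if_nonneg:
  fixes a b c :: real
  assumes "\<And>l. 0 \<le> a + 2 * l * b + l\<^sup>2 * c" "0 \<le> c"
  shows "b\<^sup>2 \<le> a * c"
proof (cases "c = 0")
  case True
  have "0 \<le> a + 2 * (-(a + 1) / (2 * b)) * b"
    using assms(1)[of "-(a + 1) / (2 * b)"] True by simp
  then have "b = 0"
    by (cases "b = 0") (simp_all add: field_simps)
  then show ?thesis
    using True by simp
next
  case False
  then have c: "c > 0"
    using assms(2) by simp
  have "0 \<le> a + 2 * (-b / c) * b + (-b / c)\<^sup>2 * c"
    by (rule assms(1))
  then show ?thesis
    using c by (simp add: power2_eq_square field_simps)
qed

lemma psd_cauchy_schwarz:
  assumes "psd X"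
  shows "(bform X u v)\<^sup>2 \<le> bform X u u * bform X v v"
proof (rule discriminant_le_if_nonneg)
  have sym: "\<forall>i j. X$i$j = X$j$i" and nonneg: "\<And>w. 0 \<le> bform X w w"
    using assms by (auto simp: psd_iff_bform)
  show "0 \<le> bform X u u + 2 * l * bform X u v + l\<^sup>2 * bform X v v" for l
    using nonneg[of "\<lambda>i. u i + l * v i"] by (simp only: bform_add_scaled[OF sym])
  show "0 \<le> bform X v v"
    by (rule nonneg)
qed

lemma psd_bform_eq_0: "psd X \<Longrightarrow> bform X v v = 0 \<Longrightarrow> bform X u v = 0"
  using psd_cauchy_schwarz[of X u v] by simp

lemma bform_indicator_left:
  "bform X (\<lambda>k. if k = i then 1 else 0) v = (\<Sum>j\<in>UNIV. X$i$j * v j)"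
proof -
  have "bform X (\<lambda>k. if k = i then 1 else 0) v
      = (\<Sum>k\<in>UNIV. if k = i then (\<Sum>j\<in>UNIV. X$k$j * v j) else 0)"
    unfolding bform_def by (intro sum.cong) auto
  then show ?thesis
    by simp
qed

lemma bform_indicator: "bform X (\<lambda>k. if k = i then 1 else 0) (\<lambda>k. if k = j then 1 else 0) = X$i$j"
  unfolding bform_indicator_left by (simp add: if_distrib cong: if_cong)

lemma bform_ones: "bform X (\<lambda>_. 1) (\<lambda>_. 1) = entry_sum X"
  by (simp add: bform_def entry_sum_def)

lemma bform_minus_outer:
  "bform (X - outer x x) u u = bform X u u - (\<Sum>i\<in>UNIV. u i * x$i)\<^sup>2"
proof -
  have "bform (X - outer x x) u u
      = (\<Sum>i\<in>UNIV. \<Sum>j\<in>UNIV. u i * X$i$j * u j - (u i * x$i) * (u j * x$j))"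
    unfolding bform_def outer_def by (simp add: algebra_simps)
  also have "\<dots> = bform X u u - (\<Sum>i\<in>UNIV. \<Sum>j\<in>UNIV. (u i * x$i) * (u j * x$j))"
    unfolding bform_def by (simp only: sum_subtractf)
  finally show ?thesis
    by (simp only: power2_eq_square sum_product)
qed

lemma bform_plus_diag:
  "bform (\<chi> i j. p * Z$i$j + (if i = j then q * d i else 0)) u v
     = p * bform Z u v + q * (\<Sum>i\<in>UNIV. u i * d i * v i)"
proof -
  have "bform (\<chi> i j. p * Z$i$j + (if i = j then q * d i else 0)) u v
     = (\<Sum>i\<in>UNIV. \<Sum>j\<in>UNIV. p * (u i * Z$i$j * v j) + (if i = j then q * (u i * d i * v i) else 0))"
    unfolding bform_def by (intro sum.cong refl) (auto simp: algebra_simps)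
  then show ?thesis
    by (simp add: sum.distrib sum_distrib_left bform_def)
qed

lemma psd_entry_sq_le: "psd Y \<Longrightarrow> (Y$i$j)\<^sup>2 \<le> Y$i$i * Y$j$j"
  using psd_cauchy_schwarz[of Y "\<lambda>k. if k = i then 1 else 0" "\<lambda>k. if k = j then 1 else 0"]
  by (simp only: bform_indicator)

lemma psd_entry_eq_0_if_diag_eq_0: "psd Y \<Longrightarrow> Y$i$i = 0 \<Longrightarrow> Y$i$j = 0"
  using psd_entry_sq_le[of Y i j] by simp

lemma psd_entry_le_mean:
  assumes "psd Y" "entrywise_nonneg Y"
  shows "Y$i$j \<le> (Y$i$i + Y$j$j) / 2"
proof -
  have "(Y$i$j)\<^sup>2 \<le> Y$i$i * Y$j$j"
    by (rule psd_entry_sq_le[OF assms(1)])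
  also have "\<dots> \<le> ((Y$i$i + Y$j$j) / 2)\<^sup>2"
  proof -
    have "((Y$i$i + Y$j$j) / 2)\<^sup>2 - Y$i$i * Y$j$j = ((Y$i$i - Y$j$j) / 2)\<^sup>2"
      by (simp add: power2_eq_square field_simps)
    then show ?thesis
      using zero_le_power2[of "(Y$i$i - Y$j$j) / 2"] by linarith
  qed
  finally have "(Y$i$j)\<^sup>2 \<le> ((Y$i$i + Y$j$j) / 2)\<^sup>2" .
  moreover have "0 \<le> (Y$i$i + Y$j$j) / 2"
    using assms(2) by (simp add: entrywise_nonneg_def)
  ultimately show ?thesis
    by (rule power2_le_imp_le)
qed

lemma bform_le_bform_abs:
  assumes "entrywise_nonneg Y"
  shows "bform Y d d \<le> bform Y (\<lambda>i. \<bar>d i\<bar>) (\<lambda>i. \<bar>d i\<bar>)"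
  unfolding bform_def
proof (intro sum_mono)
  fix i j
  have "d i * Y$i$j * d j \<le> \<bar>d i * Y$i$j * d j\<bar>"
    by simp
  also have "\<dots> = \<bar>d i\<bar> * Y$i$j * \<bar>d j\<bar>"
    using assms by (simp add: abs_mult entrywise_nonneg_def)
  finally show "d i * Y$i$j * d j \<le> \<bar>d i\<bar> * Y$i$j * \<bar>d j\<bar>" .
qed

lemma bounded_if_entries_bounded:
  assumes "\<forall>Y\<in>S. \<forall>i j. \<bar>(Y::real^'n::finite^'m::finite)$i$j\<bar> \<le> c"
  shows "bounded S"
  unfolding bounded_iff
proof (intro exI ballI)
  fix Y assume Y: "Y \<in> S"
  have "norm Y \<le> (\<Sum>i\<in>UNIV. norm (Y$i))"
    by (simp add: norm_vec_def L2_set_le_sum)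
  also have "\<dots> \<le> (\<Sum>i\<in>UNIV. \<Sum>j\<in>UNIV. \<bar>Y$i$j\<bar>)"
    by (intro sum_mono norm_le_l1_cart)
  also have "\<dots> \<le> (\<Sum>i\<in>(UNIV::'m set). \<Sum>j\<in>(UNIV::'n set). c)"
    using assms Y by (intro sum_mono) auto
  finally show "norm Y \<le> (\<Sum>i\<in>(UNIV::'m set). \<Sum>j\<in>(UNIV::'n set). c)" .
qed

section \<open>The semidefinite program \<open>Q(t)\<close>\<close>

lemma Q_feasible_iff:
  "Q_feasible t X \<longleftrightarrow> (\<forall>i j. X$i$j = X$j$i) \<and> (\<forall>u. 0 \<le> bform X u u) \<and> (\<forall>i j. 0 \<le> X$i$j)
     \<and> (\<Sum>i\<in>UNIV. X$i$i) = t \<and> (\<forall>i. (\<Sum>j\<in>UNIV. X$i$j) = t * X$i$i)"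
  unfolding Q_feasible_def mult_ones_eq_scaleR_diag_iff psd_iff_bform transpose_eq_self_iff
    trace_eq_sum_diag entrywise_nonneg_def
  by blast

lemma compact_Q_feasible:
  assumes "0 \<le> t"
  shows "compact {X. Q_feasible t X}"
proof -
  have "closed {X. Q_feasible t X}"
    unfolding Q_feasible_iff bform_def
    by (intro closed_Collect_conj closed_Collect_all closed_Collect_eq closed_Collect_le
        continuous_intros)
  moreover have "bounded {X. Q_feasible t X}"
  proof (rule bounded_if_entries_bounded[where c = "t * t"], intro ballI allI)
    fix X i j assume "X \<in> {X. Q_feasible t X}"
    then have nonneg: "\<And>i j. 0 \<le> X$i$j" and trace: "(\<Sum>i\<in>UNIV. X$i$i) = t"
      and rows: "(\<Sum>j\<in>UNIV. X$i$j) = t * X$i$i"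
      by (auto simp: Q_feasible_iff)
    have "X$i$j \<le> (\<Sum>j\<in>UNIV. X$i$j)"
      using nonneg by (intro member_le_sum) auto
    also have "\<dots> \<le> t * t"
      unfolding rows using assms nonneg trace member_le_sum[of i UNIV "\<lambda>i. X$i$i"]
      by (intro mult_left_mono) auto
    finally show "\<bar>X$i$j\<bar> \<le> t * t"
      using nonneg[of i j] by simp
  qed
  ultimately show ?thesis
    using compact_eq_bounded_closed by blast
qed

text \<open>
  For \<open>Z\<close> of trace one with row sums \<open>s diag(Z)\<close>, the matrix \<open>a Z + (1 - a) Diag(Z)\<close> has row sums
  \<open>(a s + 1 - a) diag(Z)\<close>; the weight \<open>a\<close> is chosen so that \<open>a s + 1 - a = t\<close> (if \<open>s = 1\<close>
  then \<open>t = 1\<close> and any weight works).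
\<close>
definition interpolate :: "real^'n^'n \<Rightarrow> real \<Rightarrow> real \<Rightarrow> real^'n::finite^'n" where
  "interpolate Z s t = (let a = (if s = 1 then 0 else (t - 1) / (s - 1)) in
     (\<chi> i j. t * a * Z$i$j + (if i = j then t * (1 - a) * Z$i$i else 0)))"

lemma interpolate_eq_0: "i \<noteq> j \<Longrightarrow> Z$i$j = 0 \<Longrightarrow> interpolate Z s t $ i $ j = 0"
  by (simp add: interpolate_def Let_def)

lemma Q_feasible_interpolate:
  assumes Z: "psd Z" "entrywise_nonneg Z" "trace Z = 1"
    and rows: "\<forall>i. (\<Sum>j\<in>UNIV. Z$i$j) = s * Z$i$i" and "1 \<le> t" "t \<le> s"
  shows "Q_feasible t (interpolate Z s t)"
  unfolding Q_feasible_iff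
proof (intro conjI allI)
  define a where "a = (if s = 1 then 0 else (t - 1) / (s - 1))"
  have a: "0 \<le> a" "a \<le> 1" "a * s + (1 - a) = t"
    using assms(5,6) by (auto simp: a_def field_simps)
  have X: "interpolate Z s t = (\<chi> i j. t * a * Z$i$j + (if i = j then t * (1 - a) * Z$i$i else 0))"
    unfolding interpolate_def Let_def a_def by (rule refl)
  have sym: "\<forall>i j. Z$i$j = Z$j$i" and psd: "\<forall>u. 0 \<le> bform Z u u" and nonneg: "\<forall>i j. 0 \<le> Z$i$j"
    using Z by (auto simp: psd_iff_bform entrywise_nonneg_def)
  have ta: "0 \<le> t * a" "0 \<le> t * (1 - a)"
    using a(1,2) assms(5) by simp_all
  fix i j u
  show "interpolate Z s t $ i $ j = interpolate Z s t $ j $ i"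
    using sym by (simp add: X)
  show "0 \<le> interpolate Z s t $ i $ j"
    using nonneg ta by (simp add: X)
  have "0 \<le> (\<Sum>i\<in>UNIV. Z$i$i * (u i)\<^sup>2)"
    using nonneg by (simp add: sum_nonneg)
  then have "0 \<le> (\<Sum>i\<in>UNIV. u i * Z$i$i * u i)"
    by (simp add: power2_eq_square mult_ac)
  then show "0 \<le> bform (interpolate Z s t) u u"
    unfolding X bform_plus_diag using psd ta by simp
  have "(\<Sum>j\<in>UNIV. interpolate Z s t $ i $ j)
      = t * a * (\<Sum>j\<in>UNIV. Z$i$j) + (\<Sum>j\<in>UNIV. if i = j then t * (1 - a) * Z$i$i else 0)"
    by (simp add: X sum.distrib sum_distrib_left)
  also have "\<dots> = t * Z$i$i * (a * s + (1 - a))"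
    using rows by (simp add: algebra_simps)
  also have "\<dots> = t * (t * Z$i$i)"
    unfolding a(3) by (simp add: mult_ac)
  also have "t * Z$i$i = interpolate Z s t $ i $ i"
    by (simp add: X algebra_simps)
  finally show "(\<Sum>j\<in>UNIV. interpolate Z s t $ i $ j) = t * interpolate Z s t $ i $ i" .
  have "(\<Sum>i\<in>UNIV. interpolate Z s t $ i $ i) = t * (\<Sum>i\<in>UNIV. Z$i$i)"
    by (simp add: X sum_distrib_left algebra_simps)
  then show "(\<Sum>i\<in>UNIV. interpolate Z s t $ i $ i) = t"
    using Z(3) by (simp add: trace_eq_sum_diag)
qed

lemma Q_feasible_nonempty:
  assumes "1 \<le> t" "t \<le> real CARD('n::finite)"
  shows "\<exists>X::real^'n^'n. Q_feasible t X"
proof -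
  define n where "n = real CARD('n)"
  define J where "J = ((\<chi> i j. 1 / n) :: real^'n^'n)"
  have "bform J u u = (\<Sum>i\<in>UNIV. u i)\<^sup>2 / n" for u
    by (simp add: bform_def J_def sum_product sum_divide_distrib power2_eq_square)
  then have "psd J"
    by (simp add: psd_iff_bform J_def n_def)
  moreover have "entrywise_nonneg J" "trace J = 1" "\<forall>i. (\<Sum>j\<in>UNIV. J$i$j) = n * J$i$i"
    by (simp_all add: J_def entrywise_nonneg_def trace_eq_sum_diag n_def)
  ultimately show ?thesis
    using Q_feasible_interpolate[of J n t] assms n_def by blast
qed

text \<open>Cauchy-Schwarz against \<open>e\<close>, using \<open>X e = t diag(X)\<close> and \<open>e\<^sup>T X e = t\<^sup>2\<close>.\<close>
lemma Q_feasible_psd_minus_outer_diag: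
  assumes "Q_feasible t X" "0 < t"
  shows "psd (X - outer (diag_vec X) (diag_vec X))"
  unfolding psd_iff_bform
proof (intro conjI allI)
  have X: "psd X" "(\<Sum>i\<in>UNIV. X$i$i) = t" "\<forall>i. (\<Sum>j\<in>UNIV. X$i$j) = t * X$i$i"
    using assms(1) Q_feasible_iff[of t X] by (simp_all add: Q_feasible_def)
  fix u
  have "bform X u (\<lambda>_. 1) = (\<Sum>i\<in>UNIV. u i * (\<Sum>j\<in>UNIV. X$i$j))"
    by (simp add: bform_def sum_distrib_left)
  also have "\<dots> = t * (\<Sum>i\<in>UNIV. u i * diag_vec X $ i)"
    using X(3) by (simp add: diag_vec_def sum_distrib_left mult_ac)
  moreover have "bform X (\<lambda>_. 1) (\<lambda>_. 1) = t\<^sup>2"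
    using X(2,3) by (simp add: bform_def power2_eq_square flip: sum_distrib_left)
  moreover have "(bform X u (\<lambda>_. 1))\<^sup>2 \<le> bform X u u * bform X (\<lambda>_. 1) (\<lambda>_. 1)"
    by (rule psd_cauchy_schwarz[OF X(1)])
  ultimately have "(\<Sum>i\<in>UNIV. u i * diag_vec X $ i)\<^sup>2 \<le> bform X u u"
    using assms(2) by (simp add: power_mult_distrib)
  then show "0 \<le> bform (X - outer (diag_vec X) (diag_vec X)) u u"
    by (simp add: bform_minus_outer)
next
  fix i j
  show "(X - outer (diag_vec X) (diag_vec X)) $ i $ j = (X - outer (diag_vec X) (diag_vec X)) $ j $ i"
    using assms(1) by (simp add: Q_feasible_iff outer_def mult.commute)
qed

lemma frob_inner_eq_sum: "frob_inner A X = (\<Sum>i\<in>UNIV. \<Sum>j\<in>UNIV. A$i$j * X$i$j)"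
  by (simp add: frob_inner_def trace_def matrix_matrix_mult_def transpose_def) (rule sum.swap)

lemma adj_matrix_nonneg: "0 \<le> adj_matrix E $ i $ j"
  by (simp add: adj_matrix_def)

lemma frob_inner_adj_matrix_eq_0_iff:
  assumes "entrywise_nonneg X"
  shows "frob_inner (adj_matrix E) X = 0 \<longleftrightarrow> (\<forall>i j. E i j \<longrightarrow> X$i$j = 0)"
proof -
  have terms: "0 \<le> adj_matrix E $ i $ j * X$i$j" for i j
    using assms by (simp add: adj_matrix_nonneg entrywise_nonneg_def)
  have "frob_inner (adj_matrix E) X = 0 \<longleftrightarrow> (\<forall>i. (\<Sum>j\<in>UNIV. adj_matrix E $ i $ j * X$i$j) = 0)"
    unfolding frob_inner_eq_sum using terms by (simp add: sum_nonneg_eq_0_iff sum_nonneg)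
  also have "\<dots> \<longleftrightarrow> (\<forall>i j. adj_matrix E $ i $ j * X$i$j = 0)"
    using terms by (simp add: sum_nonneg_eq_0_iff)
  also have "\<dots> \<longleftrightarrow> (\<forall>i j. E i j \<longrightarrow> X$i$j = 0)"
    by (simp add: adj_matrix_def)
  finally show ?thesis .
qed

lemma frob_inner_adj_matrix_nonneg: "entrywise_nonneg X \<Longrightarrow> 0 \<le> frob_inner (adj_matrix E) X"
  unfolding frob_inner_eq_sum entrywise_nonneg_def
  by (intro sum_nonneg mult_nonneg_nonneg adj_matrix_nonneg) auto

lemma S_val_eq_0_if_vanishing:
  assumes "Q_feasible t X" "\<forall>i j. E i j \<longrightarrow> X$i$j = 0"
  shows "S_val E t = 0"
  unfolding S_val_def
proof (rule cInf_eq_minimum)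
  have "frob_inner (adj_matrix E) X = 0"
    using assms by (simp add: frob_inner_adj_matrix_eq_0_iff Q_feasible_def)
  then show "0 \<in> {(1/2) * frob_inner (adj_matrix E) X | X. Q_feasible t X}"
    using assms(1) by force
  fix v assume "v \<in> {(1/2) * frob_inner (adj_matrix E) X | X. Q_feasible t X}"
  then show "0 \<le> v"
    using frob_inner_adj_matrix_nonneg by (force simp: Q_feasible_def)
qed

lemma S_val_eq_0_imp_vanishing:
  assumes "1 \<le> t" "t \<le> real CARD('n::finite)" "S_val E t = 0"
  obtains X :: "real^'n^'n" where "Q_feasible t X" "\<forall>i j. E i j \<longrightarrow> X$i$j = 0"
proof -
  define f where "f = (\<lambda>X::real^'n^'n. (1/2) * frob_inner (adj_matrix E) X)"
  have "compact {X::real^'n^'n. Q_feasible t X}"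
    using assms(1) by (intro compact_Q_feasible) simp
  moreover have "{X::real^'n^'n. Q_feasible t X} \<noteq> {}"
    using Q_feasible_nonempty[OF assms(1,2)] by blast
  moreover have "continuous_on {X. Q_feasible t X} f"
    unfolding f_def frob_inner_eq_sum by (intro continuous_intros)
  ultimately obtain X where X: "Q_feasible t X" and min: "\<And>Y. Q_feasible t Y \<Longrightarrow> f X \<le> f Y"
    using continuous_attains_inf[of "{X. Q_feasible t X}" f] by auto
  have "S_val E t = f X"
    unfolding S_val_def
  proof (rule cInf_eq_minimum)
    show "f X \<in> {(1/2) * frob_inner (adj_matrix E) X | X. Q_feasible t X}"
      using X f_def by auto
    fix v assume "v \<in> {(1/2) * frob_inner (adj_matrix E) X | X. Q_feasible t X}"
    then show "f X \<le> v"
      using min f_def by auto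
  qed
  then have "frob_inner (adj_matrix E) X = 0"
    using assms(3) by (simp add: f_def)
  moreover have "entrywise_nonneg X"
    using X by (simp add: Q_feasible_def)
  ultimately have "\<forall>i j. E i j \<longrightarrow> X$i$j = 0"
    by (simp add: frob_inner_adj_matrix_eq_0_iff)
  with X show thesis
    by (rule that)
qed

section \<open>Maximising the entry sum\<close>

definition schrijver_set :: "('n::finite \<Rightarrow> 'n \<Rightarrow> bool) \<Rightarrow> (real^'n^'n) set" where
  "schrijver_set E = {Y. psd Y \<and> entrywise_nonneg Y \<and> (\<forall>i j. E i j \<longrightarrow> Y$i$j = 0) \<and> trace Y = 1}"

lemma schrijver_set_entry_bounds:
  assumes "Y \<in> schrijver_set E"
  shows "0 \<le> Y$i$j" "Y$i$j \<le> (Y$i$i + Y$j$j) / 2" "Y$i$i \<le> 1"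
proof -
  have Y: "psd Y" "entrywise_nonneg Y" "(\<Sum>i\<in>UNIV. Y$i$i) = 1"
    using assms by (auto simp: schrijver_set_def trace_eq_sum_diag)
  show "0 \<le> Y$i$j"
    using Y(2) by (simp add: entrywise_nonneg_def)
  show "Y$i$j \<le> (Y$i$i + Y$j$j) / 2"
    by (rule psd_entry_le_mean[OF Y(1,2)])
  have "Y$i$i \<le> (\<Sum>i\<in>UNIV. Y$i$i)"
    using Y(2) by (intro member_le_sum) (auto simp: entrywise_nonneg_def)
  then show "Y$i$i \<le> 1"
    using Y(3) by simp
qed

lemma compact_schrijver_set: "compact (schrijver_set E)"
proof -
  have "closed (schrijver_set E)"
    unfolding schrijver_set_def psd_iff_bform bform_def entrywise_nonneg_def trace_eq_sum_diag
    by (intro closed_Collect_conj closed_Collect_all closed_Collect_imp closed_Collect_eq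
        closed_Collect_le open_Collect_const continuous_intros)
  moreover have "bounded (schrijver_set E)"
  proof (intro bounded_if_entries_bounded[where c = 1] ballI allI)
    fix Y i j assume Y: "Y \<in> schrijver_set E"
    show "\<bar>Y$i$j\<bar> \<le> 1"
      using schrijver_set_entry_bounds(1,2)[OF Y, of i j] schrijver_set_entry_bounds(3)[OF Y, of i]
        schrijver_set_entry_bounds(3)[OF Y, of j]
      by auto
  qed
  ultimately show ?thesis
    using compact_eq_bounded_closed by blast
qed

lemma entry_sum_le_card:
  fixes Y :: "real^'n::finite^'n"
  assumes "Y \<in> schrijver_set E"
  shows "entry_sum Y \<le> real CARD('n)"
proof -
  have trace: "(\<Sum>i\<in>(UNIV::'n set). Y$i$i) = 1"
    using assms by (simp add: schrijver_set_def trace_eq_sum_diag)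
  have "entry_sum Y \<le> (\<Sum>i\<in>(UNIV::'n set). \<Sum>j\<in>(UNIV::'n set). Y$i$i / 2 + Y$j$j / 2)"
    unfolding entry_sum_def using schrijver_set_entry_bounds(2)[OF assms]
    by (intro sum_mono) (simp add: add_divide_distrib)
  also have "\<dots> = real CARD('n)"
    using trace by (simp add: sum.distrib flip: sum_divide_distrib sum_distrib_left)
  finally show ?thesis .
qed

definition single_entry :: "'n::finite \<Rightarrow> real^'n^'n" where
  "single_entry k = (\<chi> i j. if i = k \<and> j = k then 1 else 0)"

lemma bform_single_entry: "bform (single_entry k) u v = u k * v k"
proof -
  have "bform (single_entry k) u v
      = (\<Sum>i\<in>UNIV. \<Sum>j\<in>UNIV. if j = k then (if i = k then u k * v k else 0) else 0)"
    unfolding bform_def single_entry_def by (intro sum.cong refl) auto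
  then show ?thesis
    by simp
qed

lemma trace_single_entry: "trace (single_entry k) = 1"
  by (simp add: trace_eq_sum_diag single_entry_def)

lemma single_entry_mem_schrijver_set:
  assumes "simple_graph E"
  shows "single_entry k \<in> schrijver_set E"
proof -
  have "psd (single_entry k)"
    unfolding psd_iff_bform bform_single_entry by (auto simp: single_entry_def)
  then show ?thesis
    using assms trace_single_entry[of k]
    by (auto simp: schrijver_set_def entrywise_nonneg_def single_entry_def simple_graph_def)
qed

lemma entry_sum_single_entry: "entry_sum (single_entry k) = 1"
  using bform_single_entry[of k "\<lambda>_. 1" "\<lambda>_. 1"] by (simp add: bform_ones)

lemma exists_max_entry_sum:
  assumes "simple_graph E"
  obtains Y where "Y \<in> schrijver_set E" "\<forall>Z\<in>schrijver_set E. entry_sum Z \<le> entry_sum Y"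
proof -
  have "continuous_on (schrijver_set E) entry_sum"
    unfolding entry_sum_def by (intro continuous_intros)
  then show thesis
    using continuous_attains_sup[OF compact_schrijver_set] single_entry_mem_schrijver_set[OF assms]
      that by blast
qed

lemma rescale_mem_schrijver_set:
  assumes Y: "Y \<in> schrijver_set E" and d: "\<And>i. 0 \<le> d i"
    and q: "q = (\<Sum>i\<in>UNIV. Y$i$i * (d i)\<^sup>2)" "0 < q"
  shows "(\<chi> i j. d i * Y$i$j * d j / q) \<in> schrijver_set E"
proof -
  define Z where "Z = (\<chi> i j. d i * Y$i$j * d j / q)"
  have "psd Y" "entrywise_nonneg Y" "\<forall>i j. E i j \<longrightarrow> Y$i$j = 0"
    using Y by (auto simp: schrijver_set_def)
  moreover have "bform Z u u = bform Y (\<lambda>i. u i * d i) (\<lambda>i. u i * d i) / q" for u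
    unfolding bform_def Z_def by (simp add: sum_divide_distrib mult_ac)
  moreover have "trace Z = 1"
    using q by (simp add: trace_eq_sum_diag Z_def power2_eq_square mult_ac flip: sum_divide_distrib)
  ultimately have "Z \<in> schrijver_set E"
    using d q(2) by (auto simp: schrijver_set_def psd_iff_bform entrywise_nonneg_def Z_def mult_ac)
  then show ?thesis
    by (simp add: Z_def)
qed

lemma bform_le_max_entry_sum_nonneg:
  assumes Y: "Y \<in> schrijver_set E" and max: "\<forall>Z\<in>schrijver_set E. entry_sum Z \<le> entry_sum Y"
    and d: "\<And>i. 0 \<le> d i"
  shows "bform Y d d \<le> entry_sum Y * (\<Sum>i\<in>UNIV. Y$i$i * (d i)\<^sup>2)"
proof -
  define q where "q = (\<Sum>i\<in>UNIV. Y$i$i * (d i)\<^sup>2)"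
  have psd: "psd Y" and nonneg: "\<And>i j. 0 \<le> Y$i$j"
    using Y by (auto simp: schrijver_set_def entrywise_nonneg_def)
  have "0 \<le> q"
    unfolding q_def using nonneg by (simp add: sum_nonneg)
  show ?thesis
  proof (cases "q = 0")
    case True
    then have "Y$i$i * (d i)\<^sup>2 = 0" for i
      using nonneg by (simp add: q_def sum_nonneg_eq_0_iff)
    then have zero: "d i * Y$i$j * d j = 0" for i j
      using psd_entry_eq_0_if_diag_eq_0[OF psd, of i j] by auto
    have "bform Y d d = 0"
      unfolding bform_def by (simp only: zero sum.neutral_const)
    then show ?thesis
      using True q_def by simp
  next
    case False
    with \<open>0 \<le> q\<close> have "0 < q"
      by simp
    have "entry_sum (\<chi> i j. d i * Y$i$j * d j / q) = bform Y d d / q"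
      unfolding entry_sum_def bform_def by (simp add: sum_divide_distrib)
    moreover have "entry_sum (\<chi> i j. d i * Y$i$j * d j / q) \<le> entry_sum Y"
      using max rescale_mem_schrijver_set[OF Y d q_def \<open>0 < q\<close>] by blast
    ultimately show ?thesis
      using \<open>0 < q\<close> by (simp add: q_def divide_le_eq mult.commute)
  qed
qed

lemma bform_le_max_entry_sum:
  assumes Y: "Y \<in> schrijver_set E" and max: "\<forall>Z\<in>schrijver_set E. entry_sum Z \<le> entry_sum Y"
  shows "bform Y d d \<le> entry_sum Y * (\<Sum>i\<in>UNIV. Y$i$i * (d i)\<^sup>2)"
proof -
  have "bform Y d d \<le> bform Y (\<lambda>i. \<bar>d i\<bar>) (\<lambda>i. \<bar>d i\<bar>)"
    using Y by (intro bform_le_bform_abs) (simp add: schrijver_set_def)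
  also have "\<dots> \<le> entry_sum Y * (\<Sum>i\<in>UNIV. Y$i$i * \<bar>d i\<bar>\<^sup>2)"
    by (rule bform_le_max_entry_sum_nonneg[OF Y max]) simp
  finally show ?thesis
    by simp
qed

text \<open>
  First-order optimality: \<open>M = s Diag(Y) - Y\<close> is positive semidefinite and \<open>e\<^sup>T M e = 0\<close>,
  so \<open>M e = 0\<close>.
\<close>
lemma row_sum_eq_max_entry_sum_diag:
  assumes Y: "Y \<in> schrijver_set E" and max: "\<forall>Z\<in>schrijver_set E. entry_sum Z \<le> entry_sum Y"
  shows "(\<Sum>j\<in>UNIV. Y$i$j) = entry_sum Y * Y$i$i"
proof -
  define s where "s = entry_sum Y"
  define M where "M = (\<chi> i j. (-1) * Y$i$j + (if i = j then s * Y$i$i else 0))"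
  have psd: "psd Y" and trace: "(\<Sum>i\<in>UNIV. Y$i$i) = 1"
    using Y by (auto simp: schrijver_set_def trace_eq_sum_diag)
  have M: "bform M u v = s * (\<Sum>i\<in>UNIV. u i * Y$i$i * v i) - bform Y u v" for u v
    unfolding M_def bform_plus_diag by simp
  have "psd M"
    unfolding psd_iff_bform
  proof (intro conjI allI)
    fix i j
    show "M$i$j = M$j$i"
      using psd by (simp add: M_def psd_iff_bform)
  next
    fix u
    have "(\<Sum>i\<in>UNIV. u i * Y$i$i * u i) = (\<Sum>i\<in>UNIV. Y$i$i * (u i)\<^sup>2)"
      by (simp add: power2_eq_square mult_ac)
    then show "0 \<le> bform M u u"
      using bform_le_max_entry_sum[OF Y max, of u] by (simp add: M s_def)
  qed
  moreover have "bform M (\<lambda>_. 1) (\<lambda>_. 1) = 0"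
    unfolding M using trace by (simp add: bform_ones s_def)
  ultimately have "bform M (\<lambda>k. if k = i then 1 else 0) (\<lambda>_. 1) = 0"
    by (rule psd_bform_eq_0)
  moreover have "(\<Sum>k\<in>UNIV. (if k = i then 1 else 0) * Y$k$k * 1) = Y$i$i"
  proof -
    have "(\<Sum>k\<in>UNIV. (if k = i then 1 else 0) * Y$k$k * 1) = (\<Sum>k\<in>UNIV. if k = i then Y$k$k else 0)"
      by (intro sum.cong) auto
    then show ?thesis
      by simp
  qed
  ultimately show ?thesis
    unfolding M by (simp add: bform_indicator_left s_def)
qed

section \<open>Schrijver's number\<close>

definition theta_plus_feasible :: "('n::finite \<Rightarrow> 'n \<Rightarrow> bool) \<Rightarrow> real^'n^'n \<Rightarrow> real^'n \<Rightarrow> bool" where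
  "theta_plus_feasible E X x \<longleftrightarrow> transpose X = X \<and> psd (X - outer x x) \<and> diag_vec X = x \<and>
      (\<forall>i j. E i j \<longrightarrow> X $ i $ j = 0) \<and> entrywise_nonneg X"

lemma theta_plus_eq_Sup: "theta_plus E = Sup {trace X | X x. theta_plus_feasible E X x}"
  by (simp add: theta_plus_def theta_plus_feasible_def)

lemma theta_plus_feasible_single_entry:
  assumes "simple_graph E"
  shows "theta_plus_feasible E (single_entry k) (diag_vec (single_entry k))"
proof -
  have "outer (diag_vec (single_entry k)) (diag_vec (single_entry k)) = single_entry k"
    by (auto simp: outer_def diag_vec_def single_entry_def vec_eq_iff)
  moreover have "psd (0 :: real^'n^'n)"
    by (simp add: psd_iff_bform bform_def)
  ultimately show ?thesis
    using single_entry_mem_schrijver_set[OF assms, of k]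
    by (simp add: theta_plus_feasible_def schrijver_set_def psd_def)
qed

lemma theta_plus_feasible_if_Q_feasible:
  assumes "Q_feasible t X" "0 < t" "\<forall>i j. E i j \<longrightarrow> X$i$j = 0"
  shows "theta_plus_feasible E X (diag_vec X)"
  using assms Q_feasible_psd_minus_outer_diag[OF assms(1,2)]
  by (simp add: theta_plus_feasible_def Q_feasible_def)

text \<open>
  A feasible \<open>X\<close> of trace \<open>r > 0\<close> gives \<open>X / r\<close> in the Schrijver set, so \<open>\<langle>J, X\<rangle> \<le> s r\<close>, while
  \<open>X - x x\<^sup>T \<succeq> 0\<close> tested against \<open>e\<close> gives \<open>\<langle>J, X\<rangle> \<ge> r\<^sup>2\<close>.
\<close>
lemma trace_le_max_entry_sum:
  assumes X: "theta_plus_feasible E X x"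
    and max: "\<forall>Z\<in>schrijver_set E. entry_sum Z \<le> s" and "1 \<le> s"
  shows "trace X \<le> s"
proof -
  define r where "r = trace X"
  have "transpose X = X" "psd (X - outer x x)" and x: "diag_vec X = x"
    and edges: "\<forall>i j. E i j \<longrightarrow> X$i$j = 0" and "entrywise_nonneg X"
    using X by (simp_all add: theta_plus_feasible_def)
  then have sym: "\<forall>i j. X$i$j = X$j$i" and shifted: "\<And>u. 0 \<le> bform (X - outer x x) u u"
    and nonneg: "\<And>i j. 0 \<le> X$i$j"
    by (simp_all add: transpose_eq_self_iff psd_iff_bform entrywise_nonneg_def)
  have "0 \<le> bform X u u" for u
    using shifted[of u] zero_le_power2[of "\<Sum>i\<in>UNIV. u i * x$i"]
    unfolding bform_minus_outer by linarith
  with sym have "psd X"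
    by (simp add: psd_iff_bform)
  have "0 \<le> r"
    unfolding r_def trace_eq_sum_diag using nonneg by (simp add: sum_nonneg)
  show ?thesis
  proof (cases "r = 0")
    case True
    then show ?thesis
      using \<open>1 \<le> s\<close> r_def by simp
  next
    case False
    with \<open>0 \<le> r\<close> have "0 < r"
      by simp
    define Z where "Z = (\<chi> i j. X$i$j / r)"
    have "bform Z u u = bform X u u / r" for u
      unfolding bform_def Z_def by (simp add: sum_divide_distrib)
    then have "psd Z"
      using \<open>psd X\<close> \<open>0 < r\<close> by (simp add: psd_iff_bform Z_def)
    moreover have "trace Z = 1"
      using \<open>0 < r\<close> unfolding Z_def trace_eq_sum_diag r_def by (simp flip: sum_divide_distrib)
    ultimately have "Z \<in> schrijver_set E"
      using nonneg \<open>0 < r\<close> edges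
      by (simp add: schrijver_set_def entrywise_nonneg_def Z_def)
    then have "entry_sum Z \<le> s"
      using max by blast
    moreover have "entry_sum Z = entry_sum X / r"
      by (simp add: entry_sum_def Z_def sum_divide_distrib)
    ultimately have "entry_sum X \<le> s * r"
      using \<open>0 < r\<close> by (simp add: pos_divide_le_eq)
    moreover have "r * r \<le> entry_sum X"
    proof -
      have "(\<Sum>i\<in>UNIV. 1 * x$i) = r"
        using x by (auto simp: r_def trace_eq_sum_diag diag_vec_def)
      then show ?thesis
        using shifted[of "\<lambda>_. 1"] unfolding bform_minus_outer by (simp add: bform_ones power2_eq_square)
    qed
    ultimately have "r * r \<le> s * r"
      by (meson order_trans)
    then show ?thesis
      using \<open>0 < r\<close> r_def by simp
  qed
qed

lemma theta_plus_le_max_entry_sum: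
  fixes E :: "'n::finite \<Rightarrow> 'n \<Rightarrow> bool"
  assumes "simple_graph E" and Y: "Y \<in> schrijver_set E"
    and max: "\<forall>Z\<in>schrijver_set E. entry_sum Z \<le> entry_sum Y"
  shows "bdd_above {trace X | X x. theta_plus_feasible E X x}"
    and "1 \<le> theta_plus E" and "theta_plus E \<le> entry_sum Y"
proof -
  fix k :: 'n
  let ?T = "{trace X | X x. theta_plus_feasible E X x}"
  have "1 \<le> entry_sum Y"
    using max single_entry_mem_schrijver_set[OF assms(1)] entry_sum_single_entry by metis
  then have bound: "\<forall>r\<in>?T. r \<le> entry_sum Y"
    using trace_le_max_entry_sum[OF _ max] by blast
  then show bdd: "bdd_above ?T"
    unfolding bdd_above_def by blast
  have "1 \<in> ?T"
    using theta_plus_feasible_single_entry[OF assms(1), of k] trace_single_entry[of k] by force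
  then show "1 \<le> theta_plus E"
    unfolding theta_plus_eq_Sup using bdd by (rule cSup_upper)
  show "theta_plus E \<le> entry_sum Y"
    unfolding theta_plus_eq_Sup using \<open>1 \<in> ?T\<close> bound by (intro cSup_least) auto
qed

lemma theta_plus_between_1_and_card:
  fixes E :: "'n::finite \<Rightarrow> 'n \<Rightarrow> bool"
  assumes "simple_graph E"
  shows "1 \<le> theta_plus E" "theta_plus E \<le> real CARD('n)"
proof -
  obtain Y where Y: "Y \<in> schrijver_set E" and max: "\<forall>Z\<in>schrijver_set E. entry_sum Z \<le> entry_sum Y"
    using exists_max_entry_sum[OF assms] .
  show "1 \<le> theta_plus E"
    by (rule theta_plus_le_max_entry_sum(2)[OF assms Y max])
  show "theta_plus E \<le> real CARD('n)"
    using theta_plus_le_max_entry_sum(3)[OF assms Y max] entry_sum_le_card[OF Y] by linarith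
qed

lemma S_val_eq_0_if_le_theta_plus:
  assumes "simple_graph E" "1 \<le> t" "t \<le> theta_plus E"
  shows "S_val E t = 0"
proof -
  obtain Y where Y: "Y \<in> schrijver_set E" and max: "\<forall>Z\<in>schrijver_set E. entry_sum Z \<le> entry_sum Y"
    using exists_max_entry_sum[OF assms(1)] .
  have "t \<le> entry_sum Y"
    using theta_plus_le_max_entry_sum(3)[OF assms(1) Y max] assms(3) by linarith
  moreover have "psd Y" "entrywise_nonneg Y" "trace Y = 1" and edges: "\<forall>i j. E i j \<longrightarrow> Y$i$j = 0"
    using Y by (simp_all add: schrijver_set_def)
  moreover have "\<forall>i. (\<Sum>j\<in>UNIV. Y$i$j) = entry_sum Y * Y$i$i"
    using row_sum_eq_max_entry_sum_diag[OF Y max] by blast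
  ultimately have "Q_feasible t (interpolate Y (entry_sum Y) t)"
    using assms(2) by (intro Q_feasible_interpolate)
  moreover have "\<forall>i j. E i j \<longrightarrow> interpolate Y (entry_sum Y) t $ i $ j = 0"
  proof (intro allI impI)
    fix i j assume "E i j"
    moreover from this have "i \<noteq> j"
      using assms(1) by (auto simp: simple_graph_def)
    ultimately show "interpolate Y (entry_sum Y) t $ i $ j = 0"
      using edges by (simp add: interpolate_eq_0)
  qed
  ultimately show ?thesis
    by (rule S_val_eq_0_if_vanishing)
qed

lemma le_theta_plus_if_S_val_eq_0:
  fixes E :: "'n::finite \<Rightarrow> 'n \<Rightarrow> bool"
  assumes "simple_graph E" "1 \<le> t" "t \<le> real CARD('n)" "S_val E t = 0"
  shows "t \<le> theta_plus E"
proof -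
  obtain X :: "real^'n^'n" where X: "Q_feasible t X" "\<forall>i j. E i j \<longrightarrow> X$i$j = 0"
    using S_val_eq_0_imp_vanishing[OF assms(2-4)] .
  moreover have "0 < t"
    using assms(2) by linarith
  ultimately have "theta_plus_feasible E X (diag_vec X)"
    by (intro theta_plus_feasible_if_Q_feasible)
  moreover have "trace X = t"
    using X(1) by (simp add: Q_feasible_def)
  ultimately have "t \<in> {trace X | X x. theta_plus_feasible E X x}"
    by blast
  moreover obtain Y where Y: "Y \<in> schrijver_set E" and max: "\<forall>Z\<in>schrijver_set E. entry_sum Z \<le> entry_sum Y"
    using exists_max_entry_sum[OF assms(1)] .
  note bdd = theta_plus_le_max_entry_sum(1)[OF assms(1) Y max]
  ultimately show ?thesis
    unfolding theta_plus_eq_Sup by (rule cSup_upper)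
qed

theorem mainTheorem13:
  fixes E :: "'n::finite \<Rightarrow> 'n \<Rightarrow> bool"
  assumes "simple_graph E"
  shows "\<lfloor>theta_plus E\<rfloor> \<in> {k::int. 1 \<le> k \<and> k \<le> int CARD('n) \<and> S_val E (of_int k) = 0}
    \<and> (\<forall>k::int. 1 \<le> k \<and> k \<le> int CARD('n) \<and> S_val E (of_int k) = 0 \<longrightarrow> k \<le> \<lfloor>theta_plus E\<rfloor>)"
proof -
  note theta = theta_plus_between_1_and_card[OF assms]
  have "1 \<le> \<lfloor>theta_plus E\<rfloor>" "\<lfloor>theta_plus E\<rfloor> \<le> int CARD('n)"
    using theta by (simp_all add: le_floor_iff floor_le_iff)
  moreover have "S_val E (of_int \<lfloor>theta_plus E\<rfloor>) = 0"
    using theta(1) by (intro S_val_eq_0_if_le_theta_plus[OF assms]) (simp_all add: le_floor_iff)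
  moreover have "k \<le> \<lfloor>theta_plus E\<rfloor>"
    if "1 \<le> k" "k \<le> int CARD('n)" "S_val E (of_int k) = 0" for k :: int
    using le_theta_plus_if_S_val_eq_0[OF assms, of "of_int k"] that by (simp add: le_floor_iff)
  ultimately show ?thesis
    by blast
qed

end
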